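(* Let $\alpha\in\mathbb{C}$ with $\Re(\alpha)>-1/2$. Then the monic polynomial sequence $\{P_n(x;\alpha)\}_{n\ge0}$ is not regularly orthogonal: there is no form $v\in\mathcal{P}'$ such that $\langle v,P_n(\cdot;\alpha)P_m(\cdot;\alpha)\rangle=k_n\delta_{n,m}$ with $k_n\neq0$ for all $n,m\in\mathbb{N}_0$.
   Context: Let $\mathcal{A}$ be the differential operator $\mathcal{A}f(x)=-x^2f''(x)-xf'(x)+x^2f(x)$ with iterates $\mathcal{A}^n$. For $\Re(\alpha)>-1/2$, $p_n(x;\alpha)=(-1)^n e^{x}x^{-\alpha}\mathcal{A}^n(e^{-x}x^{\alpha})$ is a polynomial of degree $n$ with leading coefficient $(-2)^n(\alpha+1/2)_n$, and $P_n(x;\alpha)=p_n(x;\alpha)/\big((-2)^n(\alpha+1/2)_n\big)$. $\mathcal{P}'$ is the algebraic dual of the space $\mathcal{P}$ of complex polynomials; $(y)_n$ is the Pochhammer symbol. *)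

theory Defs
  imports "HOL-Analysis.Analysis" "HOL-Computational_Algebra.Polynomial"
begin

text \<open>The differential operator A f (x) = - x^2 f''(x) - x f'(x) + x^2 f(x),
  acting on complex functions (complex derivative); we only evaluate at x > 0,
  where all functions involved are holomorphic (principal branch of powr).\<close>
definition opA :: "(complex \<Rightarrow> complex) \<Rightarrow> (complex \<Rightarrow> complex)" where
  "opA f = (\<lambda>x. - (x^2) * deriv (deriv f) x - x * deriv f x + x^2 * f x)"

definition p_fun :: "nat \<Rightarrow> complex \<Rightarrow> complex \<Rightarrow> complex" where
  "p_fun n \<alpha> x = (-1)^n * exp x * x powr (-\<alpha>) *
      (opA ^^ n) (\<lambda>y. exp (-y) * y powr \<alpha>) x"

text \<open>The monic polynomial P_n(x;alpha) = p_n(x;alpha) / ((-2)^n (alpha+1/2)_n),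
  as the (unique) polynomial agreeing with it on the positive real axis.\<close>
definition P_poly :: "nat \<Rightarrow> complex \<Rightarrow> complex poly" where
  "P_poly n \<alpha> = (THE q. \<forall>x::real. x > 0 \<longrightarrow>
      poly q (of_real x) = p_fun n \<alpha> (of_real x) / ((-2)^n * pochhammer (\<alpha> + 1/2) n))"

definition is_form :: "(complex poly \<Rightarrow> complex) \<Rightarrow> bool" where
  "is_form v \<longleftrightarrow> (\<forall>p q. v (p + q) = v p + v q) \<and> (\<forall>c p. v (smult c p) = c * v p)"

end

theory Submission
  imports Defs
begin

(*
  Write w(y) = exp(-y) y^alpha.  On the half-plane Re y > 0 the
  operator A maps w * q, for a polynomial q, to -w * B(q), where B is an explicit
  second-order differential operator on polynomials.  Iterating, A^n w = (-1)^n w * p_n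
  with p_n = B^n 1, so p_fun is the polynomial p_n on the positive reals and
  P_n = p_n / ((-2)^n (alpha+1/2)_n).

  If a form v made the P_n regularly orthogonal, it would make the p_n
  orthogonal as well, so v(p_n) = 0 for n >= 1 and v(x p_n) = 0 for n >= 2 (the latter
  because p_1 = alpha^2 - (2 alpha + 1) x).  Writing v(p_1),...,v(p_4), v(x p_2), v(x p_3)
  in terms of the moments m_i = v(x^i) gives six linear equations in m_0,...,m_4; an
  explicit elimination yields alpha^2 (2 alpha+1)^2 (2 alpha+3) m_0 = 0.  Since
  m_0 = v(p_0 p_0) is nonzero, alpha = 0, and then v(p_1 p_1) = m_2 = 0, a contradiction.
*)

definition weight :: "complex \<Rightarrow> complex \<Rightarrow> complex" where
  "weight a y = exp (-y) * y powr a"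

(* Needed to rewrite the derivative a y^(a-1) of y^a as a y^a / y. *)
lemma powr_minus_one: "z \<noteq> 0 \<Longrightarrow> (z::complex) powr (a - 1) = z powr a / z"
  by (simp add: powr_def algebra_simps exp_diff)

(* Product rule for w * R, with w' = w (a/y - 1). *)
lemma weight_mult_has_derivative:
  assumes "0 < Re y" and "(R has_field_derivative R') (at y)"
  shows "((\<lambda>y. weight a y * R y) has_field_derivative weight a y * (R' + R y * (a / y - 1))) (at y)"
proof -
  have y0: "y \<noteq> 0" and "y \<notin> \<real>\<^sub>\<le>\<^sub>0"
    using assms(1) by (auto simp: complex_nonpos_Reals_iff)
  then have "((\<lambda>y. y powr a) has_field_derivative a * y powr (a - 1)) (at y)"
    by (intro has_field_derivative_powr)
  then have "((\<lambda>y. exp (-y) * y powr a * R y) has_field_derivative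
      exp (-y) * y powr a * R' + (exp (-y) * (a * y powr (a - 1)) + exp (-y) * (-1) * y powr a) * R y) (at y)"
    by (intro DERIV_mult' assms(2)) (auto intro!: derivative_eq_intros)
  then show ?thesis
    using y0 by (simp add: weight_def powr_minus_one field_simps)
qed

lemma deriv_weight_mult:
  assumes f: "\<And>w. 0 < Re w \<Longrightarrow> f w = weight a w * R w"
    and z: "0 < Re z" and R: "(R has_field_derivative R') (at z)"
  shows "deriv f z = weight a z * (R' + R z * (a / z - 1))"
proof -
  have "eventually (\<lambda>w. w \<in> {w. 0 < Re w}) (nhds z)"
    using z by (intro eventually_nhds_in_open) (auto simp: open_halfspace_Re_gt)
  then have "eventually (\<lambda>w. f w = weight a w * R w) (nhds z)"
    by (rule eventually_mono) (simp add: f)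
  then have "deriv f z = deriv (\<lambda>w. weight a w * R w) z"
    by (rule deriv_cong_ev) simp
  also have "\<dots> = weight a z * (R' + R z * (a / z - 1))"
    by (rule DERIV_imp_deriv[OF weight_mult_has_derivative[OF z R]])
  finally show ?thesis .
qed

(* The operator on polynomials conjugate to A via the weight: A (w q) = - w B(q).
   It reads B q = x^2 q'' - (2x^2 - (2a+1)x) q' - ((2a+1)x - a^2) q. *)
definition opB :: "complex \<Rightarrow> complex poly \<Rightarrow> complex poly" where
  "opB a q = [:0, 0, 1:] * pderiv (pderiv q) - [:0, -(2*a+1), 2:] * pderiv q - [:-(a^2), 2*a+1:] * q"

(* Conjugation identity A (w q) = - w B(q) on the half-plane; by the product rule
   f' = w R1 and f'' = w (R1' + R1 (a/y - 1)). *)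
lemma opA_weight_mult:
  assumes f: "\<And>z. 0 < Re z \<Longrightarrow> f z = weight a z * poly q z" and y: "0 < Re y"
  shows "opA f y = - weight a y * poly (opB a q) y"
proof -
  define R1 where "R1 z = poly (pderiv q) z + poly q z * (a / z - 1)" for z
  define R1' where "R1' z = poly (pderiv (pderiv q)) z + poly (pderiv q) z * (a / z - 1)
      - poly q z * a / z^2" for z
  have df: "deriv f z = weight a z * R1 z" if "0 < Re z" for z
    unfolding R1_def by (rule deriv_weight_mult[OF f that poly_DERIV])
  have dR1: "(R1 has_field_derivative R1' z) (at z)" if "0 < Re z" for z
  proof -
    have "z \<noteq> 0" using that by auto
    then have "((\<lambda>z. a / z - 1) has_field_derivative - a / z^2) (at z)"
      by (auto intro!: derivative_eq_intros simp: field_simps power2_eq_square)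
    then have "(R1 has_field_derivative poly (pderiv (pderiv q)) z
        + (poly q z * (- a / z^2) + poly (pderiv q) z * (a / z - 1))) (at z)"
      unfolding R1_def[abs_def] by (intro DERIV_add poly_DERIV DERIV_mult')
    then show ?thesis by (simp add: R1'_def algebra_simps)
  qed
  have ddf: "deriv (deriv f) y = weight a y * (R1' y + R1 y * (a / y - 1))"
    by (rule deriv_weight_mult[OF df y dR1[OF y]])
  have "y \<noteq> 0" using y by auto
  then have "- (y^2 * (R1' y + R1 y * (a / y - 1))) - y * R1 y + y^2 * poly q y = - poly (opB a q) y"
    by (simp add: opB_def R1_def R1'_def field_simps power2_eq_square)
  moreover have "opA f y = weight a y * (- (y^2 * (R1' y + R1 y * (a / y - 1))) - y * R1 y + y^2 * poly q y)"
    unfolding opA_def ddf df[OF y] f[OF y] by (simp add: algebra_simps)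
  ultimately show ?thesis by simp
qed

definition p_poly :: "complex \<Rightarrow> nat \<Rightarrow> complex poly" where
  "p_poly a n = (opB a ^^ n) 1"

lemma p_poly_Suc: "p_poly a (Suc n) = opB a (p_poly a n)"
  by (simp add: p_poly_def)

(* B commutes with scalars, so the sign (-1)^n can be pulled through the iteration. *)
lemma opB_smult: "opB a (smult c q) = smult c (opB a q)"
  by (simp add: opB_def pderiv_smult smult_diff_right mult_smult_right)

lemma opA_iterate_weight:
  "0 < Re y \<Longrightarrow> (opA ^^ n) (weight a) y = (-1)^n * weight a y * poly (p_poly a n) y"
proof (induction n arbitrary: y)
  case 0
  then show ?case by (simp add: p_poly_def)
next
  case (Suc n)
  have "(opA ^^ Suc n) (weight a) y = opA ((opA ^^ n) (weight a)) y"
    by simp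
  also have "\<dots> = - weight a y * poly (opB a (smult ((-1)^n) (p_poly a n))) y"
    by (rule opA_weight_mult) (use Suc in auto)
  also have "\<dots> = (-1)^Suc n * weight a y * poly (p_poly a (Suc n)) y"
    by (simp add: opB_smult p_poly_Suc)
  finally show ?case .
qed

lemma p_fun_eq_p_poly:
  assumes "x > 0"
  shows "p_fun n a (of_real x) = poly (p_poly a n) (of_real x)"
proof -
  let ?x = "complex_of_real x"
  have "?x \<noteq> 0" and "0 < Re ?x" using assms by simp_all
  have "exp ?x * exp (- ?x) = 1" and "?x powr (-a) * ?x powr a = 1"
    using \<open>?x \<noteq> 0\<close> by (simp_all add: exp_minus powr_def flip: exp_add)
  moreover have "(-1::complex)^n * (-1)^n = 1"
    by (simp flip: power_mult_distrib)
  ultimately show ?thesis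
    using opA_iterate_weight[OF \<open>0 < Re ?x\<close>, of n a]
    by (simp add: p_fun_def weight_def[abs_def] algebra_simps)
qed

lemma poly_eq_on_positive_reals:
  fixes q r :: "complex poly"
  assumes "\<And>x::real. x > 0 \<Longrightarrow> poly q (of_real x) = poly r (of_real x)"
  shows "q = r"
proof (rule ccontr)
  assume "q \<noteq> r"
  then have "finite {z. poly (q - r) z = 0}"
    by (intro poly_roots_finite) simp
  moreover have "of_real ` {0::real<..} \<subseteq> {z. poly (q - r) z = 0}"
    using assms by auto
  ultimately have "finite (complex_of_real ` {0::real<..})"
    by (rule finite_subset[rotated])
  then have "finite {0::real<..}"
    by (rule finite_imageD) (meson inj_of_real inj_on_subset subset_UNIV)
  then show False
    using infinite_Ioi by blast
qed

lemma P_poly_eq: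
  "P_poly n a = smult (1 / ((-2)^n * pochhammer (a + 1/2) n)) (p_poly a n)"
  unfolding P_poly_def
proof (rule the_equality)
  show "\<forall>x::real. 0 < x \<longrightarrow> poly (smult (1 / ((-2)^n * pochhammer (a + 1/2) n)) (p_poly a n)) (of_real x) =
      p_fun n a (of_real x) / ((-2)^n * pochhammer (a + 1/2) n)"
    by (simp add: p_fun_eq_p_poly)
  show "q = smult (1 / ((-2)^n * pochhammer (a + 1/2) n)) (p_poly a n)"
    if "\<forall>x::real. 0 < x \<longrightarrow> poly q (of_real x) = p_fun n a (of_real x) / ((-2)^n * pochhammer (a + 1/2) n)" for q
    using that by (intro poly_eq_on_positive_reals) (simp add: p_fun_eq_p_poly)
qed

lemma degree_opB_le: "degree (opB a q) \<le> Suc (degree q)"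
proof -
  have "degree ([:0, 0, 1:] * pderiv (pderiv q)) \<le> Suc (degree q)"
  proof (cases "degree q \<le> 1")
    case True
    then have "pderiv (pderiv q) = 0"
      by (simp add: pderiv_eq_0_iff degree_pderiv)
    then show ?thesis by simp
  next
    case False
    then show ?thesis
      by (intro order.trans[OF degree_mult_le]) (simp add: degree_pderiv)
  qed
  moreover have "degree ([:0, -(2*a+1), 2:] * pderiv q) \<le> Suc (degree q)"
  proof (cases "degree q = 0")
    case True
    then show ?thesis by (simp add: pderiv_eq_0_iff[THEN iffD2])
  next
    case False
    then show ?thesis
      by (intro order.trans[OF degree_mult_le]) (simp add: degree_pderiv)
  qed
  moreover have "degree ([:-(a^2), 2*a+1:] * q) \<le> Suc (degree q)"
    by (rule order.trans[OF degree_mult_le]) simp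
  ultimately show ?thesis
    unfolding opB_def by (intro degree_diff_le) auto
qed

lemma degree_p_poly_le: "degree (p_poly a n) \<le> n"
  by (induction n) (auto simp: p_poly_def intro: order.trans[OF degree_opB_le])

lemma p_poly_1: "p_poly a 1 = [:a^2, -(2*a+1):]"
  by (simp add: p_poly_def opB_def algebra_simps power2_eq_square)

lemma p_poly_2: "p_poly a 2 = [:a^4, -(1+4*a+6*a^2+4*a^3), 3+8*a+4*a^2:]"
proof -
  have "p_poly a 2 = opB a (p_poly a 1)"
    by (simp add: p_poly_Suc eval_nat_numeral)
  then show ?thesis unfolding p_poly_1
    by (simp add: opB_def pderiv_pCons algebra_simps) (simp add: eval_nat_numeral algebra_simps)
qed

lemma p_poly_3: "p_poly a 3 = [:a^6, -(1+6*a+15*a^2+20*a^3+15*a^4+6*a^5),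
   15+58*a+77*a^2+48*a^3+12*a^4, -(15+46*a+36*a^2+8*a^3):]"
proof -
  have "p_poly a 3 = opB a (p_poly a 2)"
    by (simp add: p_poly_Suc eval_nat_numeral)
  then show ?thesis unfolding p_poly_2
    by (simp add: opB_def pderiv_pCons algebra_simps) (simp add: eval_nat_numeral algebra_simps)
qed

lemma p_poly_4: "p_poly a 4 = [:a^8, -(1+8*a+28*a^2+56*a^3+70*a^4+56*a^5+28*a^6+8*a^7),
   63+312*a+612*a^2+648*a^3+402*a^4+144*a^5+24*a^6, -(210+824*a+1116*a^2+728*a^3+240*a^4+32*a^5),
   105+352*a+344*a^2+128*a^3+16*a^4:]"
proof -
  have "p_poly a 4 = opB a (p_poly a 3)"
    by (simp add: p_poly_Suc eval_nat_numeral)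
  then show ?thesis unfolding p_poly_3
    by (simp add: opB_def pderiv_pCons algebra_simps) (simp add: eval_nat_numeral algebra_simps)
qed

lemma form_add: "is_form v \<Longrightarrow> v (p + q) = v p + v q"
  by (simp add: is_form_def)

lemma form_smult: "is_form v \<Longrightarrow> v (smult c p) = c * v p"
  by (simp add: is_form_def)

lemma form_sum:
  assumes "is_form v"
  shows "v (\<Sum>i\<in>A. f i) = (\<Sum>i\<in>A. v (f i))"
proof (induction A rule: infinite_finite_induct)
  case (infinite A)
  then show ?case using form_smult[OF assms, of 0 0] by simp
next
  case empty
  then show ?case using form_smult[OF assms, of 0 0] by simp
next
  case (insert i A)
  then show ?case by (simp add: form_add[OF assms])
qed

lemma form_monom_mult:
  assumes v: "is_form v" and "degree p \<le> n"
  shows "v (monom 1 k * p) = (\<Sum>i\<le>n. coeff p i * v (monom 1 (k + i)))"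
proof -
  have "monom 1 k * p = (\<Sum>i\<le>n. smult (coeff p i) (monom 1 (k + i)))"
    by (subst (1) poly_as_sum_of_monoms'[OF assms(2), symmetric])
       (simp add: sum_distrib_left mult_monom smult_monom)
  then show ?thesis
    by (simp add: form_sum[OF v] form_smult[OF v])
qed

(* If the moments m annihilate p_1,...,p_4 (equations p1-p4) and
   the shifted moments annihilate p_2, p_3 (equations xp2, xp3, i.e. v(x p_n) = 0), then
   a^2 (2a+1)^2 (2a+3) m_0 = 0.  Eliminating m_1,...,m_3 from p1, p2, p3, xp2 gives
   r5 m_0 = 0, eliminating m_1,...,m_4 from p1, ..., p4, xp3 gives r6 m_0 = 0, and a
   Bezout identity for the polynomials r5, r6 yields their common factor. *)
lemma moment_elimination:
  fixes a :: complex and m :: "nat \<Rightarrow> complex"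
  assumes vanish: "\<And>n. n \<in> {1, 2, 3, 4} \<Longrightarrow> (\<Sum>i\<le>n. coeff (p_poly a n) i * m i) = 0"
    and vanish_shifted: "\<And>n. n \<in> {2, 3} \<Longrightarrow> (\<Sum>i\<le>n. coeff (p_poly a n) i * m (Suc i)) = 0"
  shows "2*a^2*(2*a+1)^2*(2*a+3) * m 0 = 0"
proof -
  have p1: "(a^2) * m 0 + ((-(2*a+1)) * m 1) = 0"
    using vanish[of 1, unfolded p_poly_1] by (simp add: eval_nat_numeral add.assoc)
  have p2: "(a^4) * m 0 + ((-(1+4*a+6*a^2+4*a^3)) * m 1 + ((3+8*a+4*a^2) * m 2)) = 0"
    using vanish[of 2, unfolded p_poly_2] by (simp add: eval_nat_numeral add.assoc)
  have p3: "(a^6) * m 0 + ((-(1+6*a+15*a^2+20*a^3+15*a^4+6*a^5)) * m 1 + ((15+58*a+77*a^2+48*a^3+12*a^4) * m 2 + ((-(15+46*a+36*a^2+8*a^3)) * m 3))) = 0"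
    using vanish[of 3, unfolded p_poly_3] by (simp add: eval_nat_numeral add.assoc)
  have p4: "(a^8) * m 0 + ((-(1+8*a+28*a^2+56*a^3+70*a^4+56*a^5+28*a^6+8*a^7)) * m 1 + ((63+312*a+612*a^2+648*a^3+402*a^4+144*a^5+24*a^6) * m 2 + ((-(210+824*a+1116*a^2+728*a^3+240*a^4+32*a^5)) * m 3 + ((105+352*a+344*a^2+128*a^3+16*a^4) * m 4)))) = 0"
    using vanish[of 4, unfolded p_poly_4] by (simp add: eval_nat_numeral add.assoc)
  have xp2: "(a^4) * m 1 + ((-(1+4*a+6*a^2+4*a^3)) * m 2 + ((3+8*a+4*a^2) * m 3)) = 0"
    using vanish_shifted[of 2, unfolded p_poly_2] by (simp add: eval_nat_numeral add.assoc)
  have xp3: "(a^6) * m 1 + ((-(1+6*a+15*a^2+20*a^3+15*a^4+6*a^5)) * m 2 + ((15+58*a+77*a^2+48*a^3+12*a^4) * m 3 + ((-(15+46*a+36*a^2+8*a^3)) * m 4))) = 0"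
    using vanish_shifted[of 3, unfolded p_poly_3] by (simp add: eval_nat_numeral add.assoc)
  define r5 where "r5 = (- (21*a^2) - 206*a^3 - 836*a^4 - 1792*a^5 - 2152*a^6 - 1424*a^7 - 480*a^8 - 64*a^9)"
  define r6 where "r6 = (- (6975*a^2) - 96060*a^3 - 588778*a^4 - 2119048*a^5 - 4974904*a^6 - 8003008*a^7 - 9017680*a^8 - 7150784*a^9 - 3952320*a^10 - 1483264*a^11 - 358656*a^12 - 50176*a^13 - 3072*a^14)"
  define b5 where "b5 = - (23457120) - 68526880*a - 126872672*a^2 - 289578688*a^3 - 512215296*a^4 - 485594112*a^5 - 236942848*a^6 - 56531968*a^7 - 5210112*a^8"
  define b6 where "b6 = 69584 - 64064*a + 218944*a^2 + 108544*a^3"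
  have "r5 * m 0 = (- (21) - 206*a - 866*a^2 - 2040*a^3 - 2964*a^4 - 2752*a^5 - 1600*a^6 - 512*a^7 - 64*a^8) * ((a^2) * m 0 + ((-(2*a+1)) * m 1)) + (30 + 248*a + 821*a^2 + 1394*a^3 + 1304*a^4 + 688*a^5 + 208*a^6 + 32*a^7) * ((a^4) * m 0 + ((-(1+4*a+6*a^2+4*a^3)) * m 1 + ((3+8*a+4*a^2) * m 2))) + (- (9) - 66*a - 184*a^2 - 240*a^3 - 144*a^4 - 32*a^5) * ((a^6) * m 0 + ((-(1+6*a+15*a^2+20*a^3+15*a^4+6*a^5)) * m 1 + ((15+58*a+77*a^2+48*a^3+12*a^4) * m 2 + ((-(15+46*a+36*a^2+8*a^3)) * m 3)))) + (- (45) - 348*a - 1052*a^2 - 1568*a^3 - 1200*a^4 - 448*a^5 - 64*a^6) * ((a^4) * m 1 + ((-(1+4*a+6*a^2+4*a^3)) * m 2 + ((3+8*a+4*a^2) * m 3)))"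
    unfolding r5_def by algebra
  then have r5_vanishes: "r5 * m 0 = 0"
    using p1 p2 p3 xp2 by simp
  have "r6 * m 0 = (- (6975) - 96060*a - 599803*a^2 - 2254618*a^3 - 5704148*a^4 - 10261680*a^5 - 13481544*a^6 - 13046736*a^7 - 9249952*a^8 - 4713280*a^9 - 1665664*a^10 - 384256*a^11 - 51712*a^12 - 3072*a^13) * ((a^2) * m 0 + ((-(2*a+1)) * m 1)) + (11025 + 135570*a + 733969*a^2 + 2312672*a^3 + 4729418*a^4 + 6632616*a^5 + 6569104*a^6 + 4652320*a^7 + 2349056*a^8 + 826752*a^9 + 192000*a^10 + 26112*a^11 + 1536*a^12) * ((a^4) * m 0 + ((-(1+4*a+6*a^2+4*a^3)) * m 1 + ((3+8*a+4*a^2) * m 2))) + (- (4725) - 54000*a - 266229*a^2 - 743954*a^3 - 1304880*a^4 - 1507104*a^5 - 1172832*a^6 - 619456*a^7 - 220672*a^8 - 51712*a^9 - 7424*a^10 - 512*a^11) * ((a^6) * m 0 + ((-(1+6*a+15*a^2+20*a^3+15*a^4+6*a^5)) * m 1 + ((15+58*a+77*a^2+48*a^3+12*a^4) * m 2 + ((-(15+46*a+36*a^2+8*a^3)) * m 3)))) + (675 + 7290*a + 33408*a^2 + 84800*a^3 + 130784*a^4 + 126784*a^5 + 77312*a^6 + 28672*a^7 + 5888*a^8 + 512*a^9) * ((a^8) * m 0 + ((-(1+8*a+28*a^2+56*a^3+70*a^4+56*a^5+28*a^6+8*a^7)) * m 1 + ((63+312*a+612*a^2+648*a^3+402*a^4+144*a^5+24*a^6)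 * m 2 + ((-(210+824*a+1116*a^2+728*a^3+240*a^4+32*a^5)) * m 3 + ((105+352*a+344*a^2+128*a^3+16*a^4) * m 4))))) + (4725 + 52380*a + 248436*a^2 + 660416*a^3 + 1085088*a^4 + 1149056*a^5 + 794752*a^6 + 355328*a^7 + 98560*a^8 + 15360*a^9 + 1024*a^10) * ((a^6) * m 1 + ((-(1+6*a+15*a^2+20*a^3+15*a^4+6*a^5)) * m 2 + ((15+58*a+77*a^2+48*a^3+12*a^4) * m 3 + ((-(15+46*a+36*a^2+8*a^3)) * m 4))))"
    unfolding r6_def by algebra
  then have r6_vanishes: "r6 * m 0 = 0"
    using p1 p2 p3 p4 xp3 by simp
  have bezout: "b5 * r5 + b6 * r6 = 1208520 * (2*a^2*(2*a+1)^2*(2*a+3))"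
    unfolding b5_def b6_def r5_def r6_def by algebra
  have "(b5 * r5 + b6 * r6) * m 0 = 0"
    by (simp only: distrib_right mult.assoc r5_vanishes r6_vanishes mult_zero_right add_0)
  then show ?thesis
    unfolding bezout by simp
qed

lemma form_p_poly_1_mult:
  assumes "is_form v"
  shows "v (p_poly a 1 * q) = a^2 * v q - (2*a+1) * v (monom 1 1 * q)"
proof -
  have "p_poly a 1 * q = smult (a^2) q + smult (-(2*a+1)) (monom 1 1 * q)"
    unfolding p_poly_1 by (simp add: monom_Suc)
  then show ?thesis
    by (simp add: form_add[OF assms] form_smult[OF assms] algebra_simps)
qed

(* For Re a > -1/2 no form makes the p_n orthogonal with nonzero norms: the moment
   relations force a = 0, and then v(p_1 p_1) = m_2 = 0. *)
lemma p_poly_not_orthogonal: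
  fixes a :: complex
  assumes "Re a > -1/2" and v: "is_form v"
    and orth: "\<And>n m. n \<noteq> m \<Longrightarrow> v (p_poly a n * p_poly a m) = 0"
    and nondeg: "\<And>n. v (p_poly a n * p_poly a n) \<noteq> 0"
  shows False
proof -
  define m where "m i = v (monom 1 i)" for i
  have "2*a + 1 \<noteq> 0" and "2*a + 3 \<noteq> 0"
    using assms(1) by (auto simp: complex_eq_iff)
  have p_poly_0: "p_poly a 0 = 1"
    by (simp add: p_poly_def)
  have moments: "v (monom 1 k * p_poly a n) = (\<Sum>i\<le>n. coeff (p_poly a n) i * m (k + i))" for k n
    unfolding m_def by (rule form_monom_mult[OF v degree_p_poly_le])
  have v_p_poly: "v (p_poly a n) = 0" if "n \<noteq> 0" for n
    using orth[of 0 n] that by (simp add: p_poly_0)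
  have v_x_p_poly: "v (monom 1 1 * p_poly a n) = 0" if "n \<noteq> 0" "n \<noteq> 1" for n
    using orth[of 1 n] form_p_poly_1_mult[OF v, of a "p_poly a n"] that \<open>2*a + 1 \<noteq> 0\<close>
    by (simp add: v_p_poly)
  have vanish: "(\<Sum>i\<le>n. coeff (p_poly a n) i * m i) = 0" if "n \<in> {1, 2, 3, 4}" for n
    using moments[of 0 n] v_p_poly[of n] that by auto
  have vanish_shifted: "(\<Sum>i\<le>n. coeff (p_poly a n) i * m (Suc i)) = 0" if "n \<in> {2, 3}" for n
    using moments[of 1 n] v_x_p_poly[of n] that by auto
  have "2*a^2*(2*a+1)^2*(2*a+3) * m 0 = 0"
    by (rule moment_elimination[OF vanish vanish_shifted])
  moreover have "m 0 \<noteq> 0"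
    using nondeg[of 0] by (simp add: m_def p_poly_0)
  ultimately have "a = 0"
    using \<open>2*a + 1 \<noteq> 0\<close> \<open>2*a + 3 \<noteq> 0\<close> by simp
  then have "m 2 = 0"
    using vanish[of 1, unfolded p_poly_1] vanish[of 2, unfolded p_poly_2] by (simp add: eval_nat_numeral)
  moreover have "v (p_poly a 1 * p_poly a 1) = m 2"
    using \<open>a = 0\<close> unfolding p_poly_1 m_def by (simp add: numeral_2_eq_2 monom_Suc monom_0)
  ultimately show False
    using nondeg[of 1] by simp
qed

lemma orthogonality_rescaled:
  assumes v: "is_form v" and P: "\<And>n. P n = smult (c n) (q n)"
    and orth: "\<And>n m. v (P n * P m) = (if n = m then k n else 0)" and k: "\<And>n. k n \<noteq> 0"
  shows "\<And>n m. n \<noteq> m \<Longrightarrow> v (q n * q m) = 0" and "\<And>n. v (q n * q n) \<noteq> 0"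
proof -
  have scaled: "v (P n * P m) = c n * c m * v (q n * q m)" for n m
    by (simp add: P mult_smult_left mult_smult_right form_smult[OF v])
  have c: "c n \<noteq> 0" for n
    using orth[of n n] k[of n] by (auto simp: scaled)
  show "v (q n * q m) = 0" if "n \<noteq> m" for n m
    using orth[of n m] that c by (simp add: scaled)
  show "v (q n * q n) \<noteq> 0" for n
    using orth[of n n] k[of n] by (auto simp: scaled)
qed

theorem lemma3p2:
  fixes \<alpha> :: complex
  assumes "Re \<alpha> > -1/2"
  shows "\<not> (\<exists>v k. is_form v \<and> (\<forall>n. k n \<noteq> 0) \<and>
            (\<forall>n m. v (P_poly n \<alpha> * P_poly m \<alpha>) = (if n = m then k n else 0)))"
proof
  assume "\<exists>v k. is_form v \<and> (\<forall>n. k n \<noteq> 0) \<and>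
            (\<forall>n m. v (P_poly n \<alpha> * P_poly m \<alpha>) = (if n = m then k n else 0))"
  then obtain v k where v: "is_form v" and k: "\<forall>n. k n \<noteq> 0"
    and orth: "\<forall>n m. v (P_poly n \<alpha> * P_poly m \<alpha>) = (if n = m then k n else 0)"
    by blast
  note rescaled = orthogonality_rescaled[where P = "\<lambda>n. P_poly n \<alpha>" and q = "p_poly \<alpha>",
      OF v P_poly_eq orth[rule_format] k[rule_format]]
  show False
    by (rule p_poly_not_orthogonal[OF assms v rescaled])
qed

end
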